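(* Let $\mathcal E$ be a nonlinear order preserving form on $L^2(\mu)$. Then $\||f|\|_L\le\|f\|_L$ for all $f\in M(\mathcal E)$. If $\mathcal E$ is a nonlinear Dirichlet form, then $\|Cf\|_L\le\|f\|_L$ for all normal contractions $C\colon\mathbb R\to\mathbb R$ and all $f\in M(\mathcal E)$.
   Context: $(X,\mathfrak A,\mu)$ is a $\sigma$-finite measure space. All convex functionals $\mathcal E\colon L^2(\mu)\to[0,\infty]$ are assumed symmetric ($\mathcal E(-f)=\mathcal E(f)$) with $\mathcal E(0)=0$. A normal contraction is a 1-Lipschitz $C\colon\mathbb R\to\mathbb R$ with $C(0)=0$; it operates on $\mathcal E$ if $\mathcal E(f+Cg)+\mathcal E(f-Cg)\le\mathcal E(f+g)+\mathcal E(f-g)$ for all $f,g\in L^2(\mu)$. A nonlinear order preserving form is a lower semicontinuous convex such $\mathcal E$ on which $x\mapsto|x|$ operates; a nonlinear Dirichlet form is one on which all normal contractions operate. $M(\mathcal E)=\{f:\lim_{\lambda\to0+}\mathcal E(\lambda f)=0\}$ and $\|f\|_L=\inf\{\lambda>0:\mathcal E(\lambda^{-1}f)\le1\}$ for $f\in M(\mathcal E)$. *)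

theory Defs
  imports "HOL-Analysis.Analysis"
begin

text \<open>L^2(mu), represented by square-integrable measurable representatives;
  functionals are required to respect a.e. equality (so they are functionals on the
  quotient space L^2(mu)).\<close>
definition L2 :: "'a measure \<Rightarrow> ('a \<Rightarrow> real) set" where
  "L2 M = {f. f \<in> borel_measurable M \<and> integrable M (\<lambda>x. (f x)^2)}"

definition l2_functional :: "'a measure \<Rightarrow> (('a \<Rightarrow> real) \<Rightarrow> ennreal) \<Rightarrow> bool" where
  "l2_functional M E \<longleftrightarrow>
     (\<forall>f\<in>L2 M. \<forall>g\<in>L2 M. (AE x in M. f x = g x) \<longrightarrow> E f = E g) \<and>
     E (\<lambda>x. 0) = 0 \<and>
     (\<forall>f\<in>L2 M. E (\<lambda>x. - f x) = E f)"

definition convex_L2 :: "'a measure \<Rightarrow> (('a \<Rightarrow> real) \<Rightarrow> ennreal) \<Rightarrow> bool" where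
  "convex_L2 M E \<longleftrightarrow>
     (\<forall>f\<in>L2 M. \<forall>g\<in>L2 M. \<forall>t::real. 0 \<le> t \<and> t \<le> 1 \<longrightarrow>
        E (\<lambda>x. t * f x + (1 - t) * g x) \<le> ennreal t * E f + ennreal (1 - t) * E g)"

definition lsc_L2 :: "'a measure \<Rightarrow> (('a \<Rightarrow> real) \<Rightarrow> ennreal) \<Rightarrow> bool" where
  "lsc_L2 M E \<longleftrightarrow>
     (\<forall>f\<in>L2 M. \<forall>F. (\<forall>n. F n \<in> L2 M) \<and>
        ((\<lambda>n. integral\<^sup>L M (\<lambda>x. (F n x - f x)^2)) \<longlonglongrightarrow> 0)
        \<longrightarrow> E f \<le> liminf (\<lambda>n. E (F n)))"

definition normal_contraction :: "(real \<Rightarrow> real) \<Rightarrow> bool" where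
  "normal_contraction C \<longleftrightarrow> C 0 = 0 \<and> (\<forall>x y. \<bar>C x - C y\<bar> \<le> \<bar>x - y\<bar>)"

definition operates :: "'a measure \<Rightarrow> (real \<Rightarrow> real) \<Rightarrow> (('a \<Rightarrow> real) \<Rightarrow> ennreal) \<Rightarrow> bool" where
  "operates M C E \<longleftrightarrow>
     (\<forall>f\<in>L2 M. \<forall>g\<in>L2 M.
        E (\<lambda>x. f x + C (g x)) + E (\<lambda>x. f x - C (g x)) \<le> E (\<lambda>x. f x + g x) + E (\<lambda>x. f x - g x))"

definition order_preserving_form :: "'a measure \<Rightarrow> (('a \<Rightarrow> real) \<Rightarrow> ennreal) \<Rightarrow> bool" where
  "order_preserving_form M E \<longleftrightarrow>
     l2_functional M E \<and> convex_L2 M E \<and> lsc_L2 M E \<and> operates M abs E"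

definition dirichlet_form :: "'a measure \<Rightarrow> (('a \<Rightarrow> real) \<Rightarrow> ennreal) \<Rightarrow> bool" where
  "dirichlet_form M E \<longleftrightarrow>
     l2_functional M E \<and> convex_L2 M E \<and> lsc_L2 M E \<and>
     (\<forall>C. normal_contraction C \<longrightarrow> operates M C E)"

definition ME :: "'a measure \<Rightarrow> (('a \<Rightarrow> real) \<Rightarrow> ennreal) \<Rightarrow> ('a \<Rightarrow> real) set" where
  "ME M E = {f \<in> L2 M. ((\<lambda>l::real. E (\<lambda>x. l * f x)) \<longlongrightarrow> 0) (at_right 0)}"

definition Lnorm :: "(('a \<Rightarrow> real) \<Rightarrow> ennreal) \<Rightarrow> ('a \<Rightarrow> real) \<Rightarrow> real" where
  "Lnorm E f = Inf {l::real. l > 0 \<and> E (\<lambda>x. f x / l) \<le> 1}"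

end

theory Submission
  imports Defs
begin

text \<open>Taking \<open>f = 0\<close> in the definition of operating and using the symmetry of \<open>E\<close> gives
  \<open>E (C g) \<le> E g\<close> for every operating \<open>C\<close>. For \<open>l > 0\<close> the rescaled map \<open>y \<mapsto> C (l y) / l\<close> is
  again a normal contraction (it is \<open>\<bar>\<cdot>\<bar>\<close> when \<open>C = \<bar>\<cdot>\<bar>\<close>), so \<open>E (C f / l) \<le> E (f / l)\<close>: every
  \<open>l\<close> admissible in the infimum defining the Luxemburg norm of \<open>f\<close> is admissible for \<open>C f\<close>.\<close>

lemma L2_cmult: "g \<in> L2 M \<Longrightarrow> (\<lambda>x. c * g x) \<in> L2 M"
  unfolding L2_def by (auto simp: power_mult_distrib)

lemma L2_divide: "g \<in> L2 M \<Longrightarrow> (\<lambda>x. g x / c) \<in> L2 M"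
  using L2_cmult[of g M "1 / c"] by simp

lemma L2_comp_dominated:
  assumes "C \<in> borel_measurable borel" "\<And>y. \<bar>C y\<bar> \<le> \<bar>y\<bar>" "g \<in> L2 M"
  shows "(\<lambda>x. C (g x)) \<in> L2 M"
proof -
  have g: "g \<in> borel_measurable M" "integrable M (\<lambda>x. (g x)\<^sup>2)"
    using assms(3) unfolding L2_def by auto
  have meas: "(\<lambda>x. C (g x)) \<in> borel_measurable M"
    using measurable_compose[OF g(1) assms(1)] by (simp add: o_def)
  have "integrable M (\<lambda>x. (C (g x))\<^sup>2)"
  proof (rule Bochner_Integration.integrable_bound[OF g(2)])
    show "(\<lambda>x. (C (g x))\<^sup>2) \<in> borel_measurable M" using meas by measurable
    show "AE x in M. norm ((C (g x))\<^sup>2) \<le> norm ((g x)\<^sup>2)"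
      using assms(2) by (simp add: abs_le_square_iff)
  qed
  with meas show ?thesis unfolding L2_def by auto
qed

lemma normal_contraction_abs_le: "normal_contraction C \<Longrightarrow> \<bar>C y\<bar> \<le> \<bar>y\<bar>"
  unfolding normal_contraction_def by (metis diff_zero)

lemma normal_contraction_continuous: "normal_contraction C \<Longrightarrow> continuous_on UNIV C"
  unfolding normal_contraction_def continuous_on_iff dist_real_def
  by (meson le_less_trans)

lemma L2_comp_normal_contraction:
  assumes "normal_contraction C" "g \<in> L2 M"
  shows "(\<lambda>x. C (g x)) \<in> L2 M"
  by (rule L2_comp_dominated[OF _ normal_contraction_abs_le[OF assms(1)] assms(2)])
    (rule borel_measurable_continuous_onI[OF normal_contraction_continuous[OF assms(1)]])

lemma normal_contraction_rescale:
  assumes C: "normal_contraction C" and l: "l > 0"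
  shows "normal_contraction (\<lambda>y. C (l * y) / l)"
  unfolding normal_contraction_def
proof (intro conjI allI)
  show "C (l * 0) / l = 0" using C unfolding normal_contraction_def by simp
  fix x y
  have "\<bar>C (l * x) - C (l * y)\<bar> \<le> \<bar>l * x - l * y\<bar>"
    using C unfolding normal_contraction_def by blast
  also have "\<dots> = l * \<bar>x - y\<bar>"
    using l by (simp add: abs_mult right_diff_distrib[symmetric])
  finally show "\<bar>C (l * x) / l - C (l * y) / l\<bar> \<le> \<bar>x - y\<bar>"
    using l by (simp add: diff_divide_distrib[symmetric] pos_divide_le_eq mult.commute)
qed

lemma l2_functional_uminus: "l2_functional M E \<Longrightarrow> f \<in> L2 M \<Longrightarrow> E (\<lambda>x. - f x) = E f"
  unfolding l2_functional_def by blast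

lemma operates_imp_le:
  assumes E: "l2_functional M E" and C: "operates M C E"
    and g: "g \<in> L2 M" and Cg: "(\<lambda>x. C (g x)) \<in> L2 M"
  shows "E (\<lambda>x. C (g x)) \<le> E g"
proof -
  have "(\<lambda>x. 0::real) \<in> L2 M" unfolding L2_def by simp
  with C g have "E (\<lambda>x. C (g x)) + E (\<lambda>x. - C (g x)) \<le> E g + E (\<lambda>x. - g x)"
    unfolding operates_def by fastforce
  then have "E (\<lambda>x. C (g x)) + E (\<lambda>x. C (g x)) \<le> E g + E g"
    by (simp add: l2_functional_uminus[OF E g] l2_functional_uminus[OF E Cg])
  then show ?thesis by (meson add_strict_mono linorder_not_less)
qed

lemma ME_imp_sublevel_nonempty:
  assumes "f \<in> ME M E"
  shows "\<exists>l>0. E (\<lambda>x. f x / l) \<le> 1"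
proof -
  have "((\<lambda>l::real. E (\<lambda>x. l * f x)) \<longlongrightarrow> 0) (at_right 0)"
    using assms unfolding ME_def by auto
  then have "\<forall>\<^sub>F l in at_right (0::real). E (\<lambda>x. l * f x) < 1 \<and> l > 0"
    by (intro eventually_conj order_tendstoD(2)[of _ 0 _ "1::ennreal"])
      (simp_all add: eventually_at_right_less)
  then obtain l :: real where "E (\<lambda>x. l * f x) < 1" "l > 0"
    using eventually_happens'[OF trivial_limit_at_right_real] by blast
  then show ?thesis by (intro exI[of _ "1 / l"]) (simp add: mult.commute)
qed

text \<open>Without membership in \<open>ME M E\<close> the set defining \<open>Lnorm E f\<close> may be empty, and then
  \<open>Lnorm E f\<close> is the unspecified value \<open>Inf {}\<close>.\<close>

lemma Lnorm_mono:
  assumes f: "f \<in> ME M E" and le: "\<And>l. l > 0 \<Longrightarrow> E (\<lambda>x. h x / l) \<le> E (\<lambda>x. f x / l)"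
  shows "Lnorm E h \<le> Lnorm E f"
  unfolding Lnorm_def
proof (rule cInf_superset_mono)
  show "{l. 0 < l \<and> E (\<lambda>x. f x / l) \<le> 1} \<noteq> {}"
    using ME_imp_sublevel_nonempty[OF f] by blast
  show "bdd_below {l. 0 < l \<and> E (\<lambda>x. h x / l) \<le> 1}"
    by (rule bdd_belowI[of _ 0]) auto
  show "{l. 0 < l \<and> E (\<lambda>x. f x / l) \<le> 1} \<subseteq> {l. 0 < l \<and> E (\<lambda>x. h x / l) \<le> 1}"
    using le by (auto intro: order_trans)
qed

lemma Lnorm_normal_contraction_le:
  assumes E: "l2_functional M E" and f: "f \<in> ME M E" and C: "normal_contraction C"
    and op: "\<And>l. l > 0 \<Longrightarrow> operates M (\<lambda>y. C (l * y) / l) E"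
  shows "Lnorm E (\<lambda>x. C (f x)) \<le> Lnorm E f"
proof (rule Lnorm_mono[OF f])
  fix l :: real
  assume l: "l > 0"
  have fl: "(\<lambda>x. f x / l) \<in> L2 M"
    using f L2_divide unfolding ME_def by blast
  have "E (\<lambda>x. C (l * (f x / l)) / l) \<le> E (\<lambda>x. f x / l)"
    by (rule operates_imp_le[OF E op[OF l] fl
          L2_comp_normal_contraction[OF normal_contraction_rescale[OF C l] fl]])
  then show "E (\<lambda>x. C (f x) / l) \<le> E (\<lambda>x. f x / l)"
    using l by simp
qed

lemma normal_contraction_abs: "normal_contraction abs"
  unfolding normal_contraction_def by (simp add: abs_triangle_ineq3)

theorem lemma3p3:
  fixes M :: "'a measure" and E :: "('a \<Rightarrow> real) \<Rightarrow> ennreal"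
  assumes "sigma_finite_measure M"
  shows "(order_preserving_form M E \<longrightarrow>
            (\<forall>f\<in>ME M E. Lnorm E (\<lambda>x. \<bar>f x\<bar>) \<le> Lnorm E f))
       \<and> (dirichlet_form M E \<longrightarrow>
            (\<forall>C f. normal_contraction C \<and> f \<in> ME M E \<longrightarrow> Lnorm E (\<lambda>x. C (f x)) \<le> Lnorm E f))"
proof (intro conjI impI allI ballI)
  fix f
  assume E: "order_preserving_form M E" and f: "f \<in> ME M E"
  have "operates M (\<lambda>y. \<bar>l * y\<bar> / l) E" if "l > 0" for l :: real
  proof -
    have "(\<lambda>y. \<bar>l * y\<bar> / l) = abs"
      using that by (auto simp: abs_mult)
    with E show ?thesis unfolding order_preserving_form_def by simp
  qed
  with E show "Lnorm E (\<lambda>x. \<bar>f x\<bar>) \<le> Lnorm E f"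
    unfolding order_preserving_form_def
    by (blast intro: Lnorm_normal_contraction_le[OF _ f normal_contraction_abs])
next
  fix C f
  assume "dirichlet_form M E" and "normal_contraction C \<and> f \<in> ME M E"
  then show "Lnorm E (\<lambda>x. C (f x)) \<le> Lnorm E f"
    unfolding dirichlet_form_def
    by (blast intro: Lnorm_normal_contraction_le normal_contraction_rescale)
qed

end
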